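(* For every integer $n\geq 2$, the $n$-dimensional volume of the polytope $$\Pi_n=\{(u_1,\ldots,u_n)\in\mathbf{R}^n : u_i>0,\ u_i+u_{i+1}<\tfrac{\pi}{2}\ (1\le i\le n)\},$$ where indices are taken cyclically so that $u_{n+1}:=u_1$, equals $S(n)=\sum_{k=-\infty}^{\infty}\frac{1}{(4k+1)^n}$.
   Context: For integers $n\ge 2$ the sum $S(n)=\sum_{k\in\mathbf{Z}}(4k+1)^{-n}$ converges absolutely. *)

theory Defs
  imports "HOL-Analysis.Analysis"
begin

text \<open>Points of R^n are represented as extensional functions on the index set {0..<n};
  n-dimensional Lebesgue (Borel) volume is the product measure of lborel over {0..<n}.\<close>

definition Pi_poly :: "nat \<Rightarrow> (nat \<Rightarrow> real) set" where
  "Pi_poly n = {u \<in> {0..<n} \<rightarrow>\<^sub>E UNIV.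
      (\<forall>i<n. 0 < u i) \<and> (\<forall>i<n. u i + u ((i + 1) mod n) < pi / 2)}"

definition S_sum :: "nat \<Rightarrow> real" where
  "S_sum n = (\<Sum>\<^sub>\<infinity> k::int. 1 / (real_of_int (4 * k + 1)) ^ n)"

end

theory Submission
  imports Defs "HOL-Library.Nat_Bijection"
begin

text \<open>
  Let K(x, y) be the indicator of y > 0 and x + y < pi/2. The indicator of the polytope is the
  cyclic product K(u_1, u_2) ... K(u_n, u_1), so by Fubini its volume is the trace of the n-th
  power of the operator (T f)(y) = integral of f over (0, pi/2 - y), acting on functions on
  (0, pi/2). T has the eigenfunctions cos ((2j+1) x) with eigenvalues (-1)^j / (2j+1). The kernel
  pi/2 - max x y of T^2 has the corresponding absolutely convergent eigenfunction expansion,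
  because sum_j cos ((2j+1) t) / (2j+1)^2 = pi (pi - 2t) / 8 on [0, pi]: both sides have the same
  cosine coefficients, and a continuous function orthogonal to every cos (k t) vanishes (approximate
  it uniformly by polynomials in cos t). Applying T termwise expands the kernels of all higher
  powers, and integrating along the diagonal gives sum_j ((-1)^j / (2j+1))^n, which is S(n)
  because (-1)^j (2j+1) runs exactly once through the integers of the form 4k+1.
\<close>

section \<open>Iterated kernels\<close>

text \<open>Note the offset: iterated_kernel M K m is the kernel of the (m + 1)-fold composition of K.\<close>

fun iterated_kernel :: "'a measure \<Rightarrow> ('a \<Rightarrow> 'a \<Rightarrow> ennreal) \<Rightarrow> nat \<Rightarrow> 'a \<Rightarrow> 'a \<Rightarrow> ennreal" where
  "iterated_kernel M K 0 x y = K x y"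
| "iterated_kernel M K (Suc m) x y = (\<integral>\<^sup>+z. iterated_kernel M K m x z * K z y \<partial>M)"

context sigma_finite_measure
begin

lemma borel_measurable_kernel_sections:
  assumes "case_prod K \<in> borel_measurable (M \<Otimes>\<^sub>M M)" "a \<in> space M"
  shows "K a \<in> borel_measurable M" "(\<lambda>x. K x a) \<in> borel_measurable M"
  using measurable_Pair2[OF assms] measurable_Pair1[OF assms] by simp_all

lemma borel_measurable_kernel_compose:
  assumes [measurable]: "case_prod K \<in> borel_measurable (M \<Otimes>\<^sub>M M)" "case_prod L \<in> borel_measurable (M \<Otimes>\<^sub>M M)"
  shows "(\<lambda>(x, y). \<integral>\<^sup>+z. K x z * L z y \<partial>M) \<in> borel_measurable (M \<Otimes>\<^sub>M M)"
proof -
  have "(\<lambda>(p, z). K (fst p) z * L z (snd p)) \<in> borel_measurable ((M \<Otimes>\<^sub>M M) \<Otimes>\<^sub>M M)"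
    by measurable
  from borel_measurable_nn_integral[OF this] show ?thesis
    by (simp add: case_prod_beta')
qed

lemma borel_measurable_iterated_kernel[measurable]:
  assumes "case_prod K \<in> borel_measurable (M \<Otimes>\<^sub>M M)"
  shows "case_prod (iterated_kernel M K m) \<in> borel_measurable (M \<Otimes>\<^sub>M M)"
  by (induction m) (simp_all add: assms borel_measurable_kernel_compose)

lemma nn_integral_iterated_kernel_Suc:
  assumes [measurable]: "case_prod K \<in> borel_measurable (M \<Otimes>\<^sub>M M)" "f \<in> borel_measurable M"
    and "x \<in> space M"
  shows "(\<integral>\<^sup>+z. (\<integral>\<^sup>+y. f y * K z y \<partial>M) * iterated_kernel M K k x z \<partial>M)
    = (\<integral>\<^sup>+y. f y * iterated_kernel M K (Suc k) x y \<partial>M)"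
proof -
  interpret MM: pair_sigma_finite M M by standard
  note [measurable] = borel_measurable_kernel_sections(1)[OF borel_measurable_iterated_kernel \<open>x \<in> space M\<close>]
  have "(\<integral>\<^sup>+z. (\<integral>\<^sup>+y. f y * K z y \<partial>M) * iterated_kernel M K k x z \<partial>M)
      = (\<integral>\<^sup>+z. \<integral>\<^sup>+y. f y * (iterated_kernel M K k x z * K z y) \<partial>M \<partial>M)"
  proof (rule nn_integral_cong)
    fix z assume "z \<in> space M"
    then have "(\<lambda>y. f y * K z y) \<in> borel_measurable M"
      by (intro borel_measurable_times borel_measurable_kernel_sections) measurable
    from nn_integral_multc[OF this, of "iterated_kernel M K k x z"]
    show "(\<integral>\<^sup>+y. f y * K z y \<partial>M) * iterated_kernel M K k x z
        = (\<integral>\<^sup>+y. f y * (iterated_kernel M K k x z * K z y) \<partial>M)"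
      by (simp add: mult_ac)
  qed
  also have "\<dots> = (\<integral>\<^sup>+y. \<integral>\<^sup>+z. f y * (iterated_kernel M K k x z * K z y) \<partial>M \<partial>M)"
    by (rule MM.Fubini') measurable
  also have "\<dots> = (\<integral>\<^sup>+y. f y * iterated_kernel M K (Suc k) x y \<partial>M)"
    by (intro nn_integral_cong) (simp add: nn_integral_cmult)
  finally show ?thesis .
qed

lemma nn_integral_PiM_integrate_last:
  assumes [measurable]: "case_prod K \<in> borel_measurable (M \<Otimes>\<^sub>M M)" "case_prod \<phi> \<in> borel_measurable (M \<Otimes>\<^sub>M M)"
  shows "(\<integral>\<^sup>+u. \<phi> (u 0) (u (Suc (Suc k))) * (\<Prod>i<Suc (Suc k). K (u i) (u (Suc i))) \<partial>PiM {0..<Suc (Suc (Suc k))} (\<lambda>_. M))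
    = (\<integral>\<^sup>+u. (\<integral>\<^sup>+y. \<phi> (u 0) y * K (u (Suc k)) y \<partial>M) * (\<Prod>i<Suc k. K (u i) (u (Suc i))) \<partial>PiM {0..<Suc (Suc k)} (\<lambda>_. M))"
proof -
  interpret product_sigma_finite "\<lambda>_. M" by standard
  have "{0..<Suc (Suc (Suc k))} = insert (Suc (Suc k)) {0..<Suc (Suc k)}" by auto
  then have "(\<integral>\<^sup>+u. \<phi> (u 0) (u (Suc (Suc k))) * (\<Prod>i<Suc (Suc k). K (u i) (u (Suc i))) \<partial>PiM {0..<Suc (Suc (Suc k))} (\<lambda>_. M))
      = (\<integral>\<^sup>+u. (\<integral>\<^sup>+y. \<phi> (u 0) y * K (u (Suc k)) y * (\<Prod>i<Suc k. K (u i) (u (Suc i))) \<partial>M) \<partial>PiM {0..<Suc (Suc k)} (\<lambda>_. M))"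
    by (simp only:, subst product_nn_integral_insert)
       (auto intro!: nn_integral_cong prod.cong simp: mult_ac)
  also have "\<dots> = (\<integral>\<^sup>+u. (\<integral>\<^sup>+y. \<phi> (u 0) y * K (u (Suc k)) y \<partial>M) * (\<Prod>i<Suc k. K (u i) (u (Suc i))) \<partial>PiM {0..<Suc (Suc k)} (\<lambda>_. M))"
  proof (intro nn_integral_cong nn_integral_multc)
    fix u assume "u \<in> space (PiM {0..<Suc (Suc k)} (\<lambda>_. M))"
    then have "u 0 \<in> space M" "u (Suc k) \<in> space M"
      by (auto simp: space_PiM)
    then show "(\<lambda>y. \<phi> (u 0) y * K (u (Suc k)) y) \<in> borel_measurable M"
      by (intro borel_measurable_times borel_measurable_kernel_sections) measurable
  qed
  finally show ?thesis .
qed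

lemma nn_integral_PiM_kernel_chain:
  assumes [measurable]: "case_prod K \<in> borel_measurable (M \<Otimes>\<^sub>M M)" "case_prod \<phi> \<in> borel_measurable (M \<Otimes>\<^sub>M M)"
  shows "(\<integral>\<^sup>+u. \<phi> (u 0) (u (Suc k)) * (\<Prod>i<Suc k. K (u i) (u (Suc i))) \<partial>PiM {0..<Suc (Suc k)} (\<lambda>_. M))
    = (\<integral>\<^sup>+x. \<integral>\<^sup>+z. \<phi> x z * iterated_kernel M K k x z \<partial>M \<partial>M)"
  using assms(2)
proof (induction k arbitrary: \<phi>)
  case 0
  note [measurable] = "0"
  interpret product_sigma_finite "\<lambda>_. M" by standard
  have "{0..<Suc (Suc 0)} = insert (Suc 0) {0}" by auto
  then have "(\<integral>\<^sup>+u. \<phi> (u 0) (u (Suc 0)) * (\<Prod>i<Suc 0. K (u i) (u (Suc i))) \<partial>PiM {0..<Suc (Suc 0)} (\<lambda>_. M))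
      = (\<integral>\<^sup>+u. (\<integral>\<^sup>+y. \<phi> (u 0) y * K (u 0) y \<partial>M) \<partial>PiM {0::nat} (\<lambda>_. M))"
    by (simp only:, subst product_nn_integral_insert) (simp_all, measurable)
  also have "\<dots> = (\<integral>\<^sup>+x. \<integral>\<^sup>+y. \<phi> x y * K x y \<partial>M \<partial>M)"
    by (rule product_nn_integral_singleton) measurable
  finally show ?case by simp
next
  case (Suc k)
  note [measurable] = Suc.prems borel_measurable_kernel_compose[OF Suc.prems assms(1)]
  have "(\<integral>\<^sup>+u. \<phi> (u 0) (u (Suc (Suc k))) * (\<Prod>i<Suc (Suc k). K (u i) (u (Suc i))) \<partial>PiM {0..<Suc (Suc (Suc k))} (\<lambda>_. M))
      = (\<integral>\<^sup>+u. (\<integral>\<^sup>+y. \<phi> (u 0) y * K (u (Suc k)) y \<partial>M) * (\<Prod>i<Suc k. K (u i) (u (Suc i))) \<partial>PiM {0..<Suc (Suc k)} (\<lambda>_. M))"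
    by (rule nn_integral_PiM_integrate_last) measurable
  also have "\<dots> = (\<integral>\<^sup>+x. \<integral>\<^sup>+z. (\<integral>\<^sup>+y. \<phi> x y * K z y \<partial>M) * iterated_kernel M K k x z \<partial>M \<partial>M)"
    by (rule Suc.IH[of "\<lambda>x z. \<integral>\<^sup>+y. \<phi> x y * K z y \<partial>M"]) measurable
  also have "\<dots> = (\<integral>\<^sup>+x. \<integral>\<^sup>+y. \<phi> x y * iterated_kernel M K (Suc k) x y \<partial>M \<partial>M)"
    by (intro nn_integral_cong nn_integral_iterated_kernel_Suc borel_measurable_kernel_sections) measurable
  finally show ?case .
qed

lemma nn_integral_PiM_cyclic_kernel_product:
  assumes [measurable]: "case_prod K \<in> borel_measurable (M \<Otimes>\<^sub>M M)"
  shows "(\<integral>\<^sup>+u. (\<Prod>i<Suc m. K (u i) (u (Suc i mod Suc m))) \<partial>PiM {0..<Suc m} (\<lambda>_. M))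
    = (\<integral>\<^sup>+x. iterated_kernel M K m x x \<partial>M)"
proof (cases m)
  case 0
  interpret product_sigma_finite "\<lambda>_. M" by standard
  have "(\<lambda>x. K x x) \<in> borel_measurable M" by measurable
  from product_nn_integral_singleton[OF this] 0 show ?thesis by simp
next
  case (Suc k)
  have "(\<Prod>i<Suc m. K (u i) (u (Suc i mod Suc m)))
      = K (u (Suc k)) (u 0) * (\<Prod>i<Suc k. K (u i) (u (Suc i)))" for u :: "nat \<Rightarrow> 'a"
  proof -
    have "(\<Prod>i<Suc k. K (u i) (u (Suc i mod Suc m))) = (\<Prod>i<Suc k. K (u i) (u (Suc i)))"
      by (intro prod.cong) (auto simp: Suc)
    then show ?thesis
      by (simp only: Suc prod.lessThan_Suc[of _ "Suc k"]) (simp add: mult.commute)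
  qed
  then have "(\<integral>\<^sup>+u. (\<Prod>i<Suc m. K (u i) (u (Suc i mod Suc m))) \<partial>PiM {0..<Suc m} (\<lambda>_. M))
      = (\<integral>\<^sup>+x. \<integral>\<^sup>+z. K z x * iterated_kernel M K k x z \<partial>M \<partial>M)"
    unfolding Suc by (simp only:, intro nn_integral_PiM_kernel_chain) measurable
  also have "\<dots> = (\<integral>\<^sup>+x. iterated_kernel M K m x x \<partial>M)"
    unfolding Suc by (simp add: mult.commute)
  finally show ?thesis .
qed

end

section \<open>Cosine series on [0, pi]\<close>

lemma has_integral_suminf_uniform:
  fixes f :: "nat \<Rightarrow> 'a::ordered_euclidean_space \<Rightarrow> 'b::banach"
  assumes cont: "\<And>j. continuous_on {a..b} (f j)"
    and bound: "\<And>j x. x \<in> {a..b} \<Longrightarrow> norm (f j x) \<le> M j" and "summable M"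
    and int: "\<And>j. (f j has_integral I j) {a..b}"
  shows "((\<lambda>x. \<Sum>j. f j x) has_integral (\<Sum>j. I j)) {a..b}"
proof -
  have "uniform_limit {a..b} (\<lambda>n x. \<Sum>j<n. f j x) (\<lambda>x. \<Sum>j. f j x) sequentially"
    by (rule Weierstrass_m_test) (use bound \<open>summable M\<close> in auto)
  moreover have "continuous_on {a..b} (\<lambda>x. \<Sum>j<n. f j x)" for n
    by (intro continuous_on_sum cont)
  ultimately obtain I' J where I': "\<And>n. ((\<lambda>x. \<Sum>j<n. f j x) has_integral I' n) {a..b}"
    and J: "((\<lambda>x. \<Sum>j. f j x) has_integral J) {a..b}" and "I' \<longlonglongrightarrow> J"
    by (rule uniform_limit_integral) auto
  moreover have "I' = (\<lambda>n. \<Sum>j<n. I j)"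
    using has_integral_unique[OF I' has_integral_sum[OF _ int]] by auto
  ultimately have "I sums J"
    by (simp add: sums_def)
  with J show ?thesis by (simp add: sums_iff)
qed

lemma fundamental_theorem_of_calculus_real:
  assumes "a \<le> b" "\<And>x. (F has_real_derivative f x) (at x)"
  shows "(f has_integral (F b - F a)) {a..b}"
  using assms
  by (intro fundamental_theorem_of_calculus)
     (auto simp flip: has_real_derivative_iff_has_vector_derivative intro: has_field_derivative_at_within)

lemma has_integral_cos_scaled:
  fixes r a b :: real
  assumes "r \<noteq> 0" "a \<le> b"
  shows "((\<lambda>t. cos (r * t)) has_integral ((sin (r * b) - sin (r * a)) / r)) {a..b}"
proof -
  have "((\<lambda>t. sin (r * t) / r) has_real_derivative cos (r * x)) (at x)" for x
    using assms by (auto intro!: derivative_eq_intros)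
  from fundamental_theorem_of_calculus_real[OF assms(2) this] show ?thesis
    by (simp add: diff_divide_distrib)
qed

lemma has_integral_cos_mult_cos:
  "((\<lambda>t. cos (real p * t) * cos (real k * t)) has_integral
      (if p = k then if p = 0 then pi else pi / 2 else 0)) {0..pi}"
proof -
  have prod_to_sum: "cos (real p * t) * cos (real k * t)
      = cos ((real p - real k) * t) / 2 + cos ((real p + real k) * t) / 2" for t
    by (simp add: cos_times_cos left_diff_distrib distrib_right add_divide_distrib)
  have integral_cos: "((\<lambda>t. cos (r * t) / 2) has_integral (if r = 0 then pi / 2 else 0)) {0..pi}"
    if "sin (r * pi) = 0" for r :: real
  proof (cases "r = 0")
    case True
    then show ?thesis using has_integral_const_real[of "1/2::real" 0 pi] by simp
  next
    case False
    from has_integral_divide[OF has_integral_cos_scaled[OF this, of 0 pi], of 2] that False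
    show ?thesis by simp
  qed
  have sin_0: "sin ((real p - real k) * pi) = 0" "sin ((real p + real k) * pi) = 0"
    by (simp_all add: left_diff_distrib distrib_right sin_diff sin_add)
  have freq_0: "real p - real k = 0 \<longleftrightarrow> p = k" "real p + real k = 0 \<longleftrightarrow> p = 0 \<and> k = 0"
    by linarith+
  from has_integral_add[OF integral_cos[OF sin_0(1)] integral_cos[OF sin_0(2)], unfolded freq_0]
  have "((\<lambda>t. cos (real p * t) * cos (real k * t)) has_integral
      (if p = k then pi / 2 else 0) + (if p = 0 \<and> k = 0 then pi / 2 else 0)) {0..pi}"
    unfolding prod_to_sum .
  moreover have "(if p = k then pi / 2 else 0) + (if p = 0 \<and> k = 0 then pi / 2 else 0)
      = (if p = k then if p = 0 then pi else pi / 2 else 0)"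
    by auto
  ultimately show ?thesis by simp
qed

lemma cos_mult_cos_nat_obtain:
  obtains k' :: nat where "\<And>t. cos t * cos (real k * t) = (cos (real (k + 1) * t) + cos (real k' * t)) / 2"
proof
  fix t
  have "cos t * cos (real k * t) = (cos (t - real k * t) + cos (t + real k * t)) / 2"
    by (rule cos_times_cos)
  also have "cos (t - real k * t) = cos (real (nat \<bar>int k - 1\<bar>) * t)"
  proof (cases "k = 0")
    case False
    have "cos (t - real k * t) = cos (real k * t - t)"
      by (metis cos_minus minus_diff_eq)
    with False show ?thesis
      by (simp add: of_nat_diff left_diff_distrib nat_diff_distrib')
  qed simp
  finally show "cos t * cos (real k * t) = (cos (real (k + 1) * t) + cos (real (nat \<bar>int k - 1\<bar>) * t)) / 2"
    by (simp add: algebra_simps)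
qed

lemma has_integral_mult_cos_power_mult_cos_eq_0:
  assumes orth: "\<And>k::nat. ((\<lambda>t. f t * cos (real k * t)) has_integral 0) {0..pi}"
  shows "((\<lambda>t. f t * cos t ^ j * cos (real k * t)) has_integral 0) {0..pi}"
proof (induction j arbitrary: k)
  case 0
  show ?case using orth[of k] by simp
next
  case (Suc j)
  obtain k' where k': "\<And>t. cos t * cos (real k * t) = (cos (real (k + 1) * t) + cos (real k' * t)) / 2"
    using cos_mult_cos_nat_obtain[of k] by metis
  have "f t * cos t ^ Suc j * cos (real k * t)
      = (f t * cos t ^ j * cos (real (k + 1) * t)) / 2 + (f t * cos t ^ j * cos (real k' * t)) / 2" for t
  proof -
    have "f t * cos t ^ Suc j * cos (real k * t) = f t * cos t ^ j * (cos t * cos (real k * t))"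
      by (simp add: mult_ac)
    then show ?thesis
      by (simp only: k') (simp add: field_simps)
  qed
  with has_integral_add[OF has_integral_divide[OF Suc.IH[of "k + 1"]] has_integral_divide[OF Suc.IH[of k']], of 2 2]
  show ?case by simp
qed

lemma has_integral_mult_polynomial_cos_eq_0:
  assumes orth: "\<And>k::nat. ((\<lambda>t. f t * cos (real k * t)) has_integral 0) {0..pi}"
    and "real_polynomial_function P"
  shows "((\<lambda>t. f t * P (cos t)) has_integral 0) {0..pi}"
proof -
  obtain a n where P: "P = (\<lambda>x. \<Sum>i\<le>n. a i * x ^ i)"
    using \<open>real_polynomial_function P\<close> real_polynomial_function_iff_sum by blast
  have "((\<lambda>t. \<Sum>i\<le>n. a i * (f t * cos t ^ i * cos (real 0 * t))) has_integral (\<Sum>i\<le>n. a i * 0)) {0..pi}"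
    by (intro has_integral_sum has_integral_mult_right has_integral_mult_cos_power_mult_cos_eq_0 orth) auto
  moreover have "(\<Sum>i\<le>n. a i * (f t * cos t ^ i * cos (real 0 * t))) = f t * P (cos t)" for t
    unfolding P sum_distrib_left by (simp add: ac_simps)
  ultimately show ?thesis
    by simp
qed

lemma polynomial_cos_approximation:
  assumes cont: "continuous_on {0..pi} f" and "d > 0"
  obtains P where "real_polynomial_function P" "continuous_on {0..pi} (\<lambda>t. P (cos t))"
    "\<And>t. t \<in> {0..pi} \<Longrightarrow> \<bar>f t - P (cos t)\<bar> < d"
proof -
  have "continuous_on {-1..1} (\<lambda>s. f (arccos s))"
    by (intro continuous_on_compose2[OF cont continuous_on_arccos']) (auto intro: arccos_lbound arccos_ubound)
  then obtain P where P: "real_polynomial_function P"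
    and approx: "\<And>s. s \<in> {-1..1} \<Longrightarrow> \<bar>f (arccos s) - P s\<bar> < d"
    using Stone_Weierstrass_real_polynomial_function[OF compact_Icc _ \<open>d > 0\<close>] by blast
  have "continuous_on UNIV P"
    using P by (simp add: real_polynomial_function_eq continuous_on_polymonial_function)
  then have "continuous_on {0..pi} (\<lambda>t. P (cos t))"
    by (rule continuous_on_compose2) (auto intro: continuous_intros)
  moreover have "\<bar>f t - P (cos t)\<bar> < d" if "t \<in> {0..pi}" for t
    using approx[of "cos t"] that by (simp add: arccos_cos)
  ultimately show ?thesis
    using P that by blast
qed

lemma integral_square_le_if_orthogonal_cos:
  assumes cont: "continuous_on {0..pi} f"
    and orth: "\<And>k::nat. ((\<lambda>t. f t * cos (real k * t)) has_integral 0) {0..pi}"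
    and "e > 0"
  shows "integral {0..pi} (\<lambda>t. f t ^ 2) \<le> e"
proof -
  obtain B where "B > 0" and B: "\<And>t. t \<in> {0..pi} \<Longrightarrow> \<bar>f t\<bar> \<le> B"
    using compact_imp_bounded[OF compact_continuous_image[OF cont compact_Icc]]
    unfolding bounded_pos by force
  define d where "d = e / (B * pi)"
  have "d > 0" using \<open>B > 0\<close> \<open>e > 0\<close> by (simp add: d_def)
  then obtain P where P: "real_polynomial_function P" and cont_P: "continuous_on {0..pi} (\<lambda>t. P (cos t))"
    and approx: "\<And>t. t \<in> {0..pi} \<Longrightarrow> \<bar>f t - P (cos t)\<bar> < d"
    using polynomial_cos_approximation[OF cont] by blast
  have "(\<lambda>t. f t * f t) integrable_on {0..pi}"
    by (intro integrable_continuous_interval continuous_on_mult cont)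
  with has_integral_mult_polynomial_cos_eq_0[OF orth P]
  have "integral {0..pi} (\<lambda>t. f t ^ 2) = integral {0..pi} (\<lambda>t. f t * (f t - P (cos t)))"
    by (simp add: right_diff_distrib power2_eq_square integral_diff integral_unique has_integral_integrable)
  also have "\<dots> \<le> integral {0..pi} (\<lambda>t. B * d)"
  proof (rule integral_le)
    show "(\<lambda>t. f t * (f t - P (cos t))) integrable_on {0..pi}"
      by (intro integrable_continuous_interval continuous_intros cont cont_P)
    show "(\<lambda>t. B * d) integrable_on {0..pi}"
      by (rule integrable_const_ivl)
    fix t assume t: "t \<in> {0..pi}"
    have "f t * (f t - P (cos t)) \<le> \<bar>f t\<bar> * \<bar>f t - P (cos t)\<bar>"
      by (metis abs_ge_self abs_mult)
    also have "\<dots> \<le> B * d"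
      using B[OF t] approx[OF t] by (intro mult_mono) auto
    finally show "f t * (f t - P (cos t)) \<le> B * d" .
  qed
  also have "\<dots> = e"
    using \<open>B > 0\<close> by (simp add: d_def)
  finally show ?thesis .
qed

lemma orthogonal_cos_imp_eq_0:
  assumes cont: "continuous_on {0..pi} f"
    and orth: "\<And>k::nat. ((\<lambda>t. f t * cos (real k * t)) has_integral 0) {0..pi}"
    and "t \<in> {0..pi}"
  shows "f t = 0"
proof -
  have int: "(\<lambda>t. f t ^ 2) integrable_on {0..pi}"
    by (intro integrable_continuous_interval continuous_intros cont)
  have "integral {0..pi} (\<lambda>t. f t ^ 2) \<le> 0"
    using integral_square_le_if_orthogonal_cos[OF cont orth] by (rule field_le_epsilon) simp
  moreover have "integral {0..pi} (\<lambda>t. f t ^ 2) \<ge> 0"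
    by (intro integral_nonneg int) auto
  ultimately have square_0: "((\<lambda>t. f t ^ 2) has_integral 0) {0..pi}"
    using integrable_integral[OF int] by simp
  have "f t ^ 2 = 0"
  proof (rule has_integral_0_cbox_imp_0[of 0 pi "\<lambda>t. f t ^ 2"])
    show "continuous_on (cbox 0 pi) (\<lambda>t. f t ^ 2)"
      by (simp add: continuous_intros cont)
    show "((\<lambda>t. f t ^ 2) has_integral 0) (cbox 0 pi)"
      using square_0 by simp
    show "box 0 pi \<noteq> {}"
      using pi_gt_zero by (simp del: pi_gt_zero)
    show "t \<in> cbox 0 pi"
      using \<open>t \<in> {0..pi}\<close> by simp
  qed simp
  then show ?thesis by simp
qed

definition odd_freq :: "nat \<Rightarrow> real" where
  "odd_freq j = real (2 * j + 1)"

lemma odd_freq_ge_1: "odd_freq j \<ge> 1"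
  by (simp add: odd_freq_def)

lemma odd_freq_pos: "odd_freq j > 0"
  by (simp add: odd_freq_def)

lemma summable_inverse_odd_freq_square: "summable (\<lambda>j. 1 / odd_freq j ^ 2)"
proof (rule summable_comparison_test[OF _ inverse_power_summable[of 2]])
  show "\<exists>N. \<forall>j\<ge>N. norm (1 / odd_freq j ^ 2) \<le> inverse (real j ^ 2)"
    by (intro exI[of _ 1]) (auto simp: odd_freq_def field_simps)
qed simp

definition odd_cosine_series :: "real \<Rightarrow> real" where
  "odd_cosine_series t = (\<Sum>j. cos (odd_freq j * t) / odd_freq j ^ 2)"

lemma abs_cos_div_odd_freq_square_le: "\<bar>cos (odd_freq j * t)\<bar> / odd_freq j ^ 2 \<le> 1 / odd_freq j ^ 2"
  by (simp add: divide_right_mono)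

lemma summable_odd_cosine_series: "summable (\<lambda>j. cos (odd_freq j * t) / odd_freq j ^ 2)"
  by (rule summable_comparison_test[OF _ summable_inverse_odd_freq_square])
     (simp add: abs_cos_div_odd_freq_square_le)

lemma continuous_on_odd_cosine_series: "continuous_on A odd_cosine_series"
proof -
  have "uniform_limit A (\<lambda>n t. \<Sum>j<n. cos (odd_freq j * t) / odd_freq j ^ 2) odd_cosine_series sequentially"
    unfolding odd_cosine_series_def
    by (rule Weierstrass_m_test[OF _ summable_inverse_odd_freq_square])
       (simp add: abs_cos_div_odd_freq_square_le)
  then show ?thesis
    by (rule uniform_limit_theorem[rotated])
       (auto intro!: always_eventually continuous_intros simp: odd_freq_def)
qed

lemma has_integral_odd_cosine_series_mult_cos:
  "((\<lambda>t. odd_cosine_series t * cos (real k * t)) has_integral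
      (if odd k then pi / (2 * real k ^ 2) else 0)) {0..pi}"
proof -
  define I where "I j = (if k = 2 * j + 1 then pi / (2 * real k ^ 2) else 0)" for j
  have "((\<lambda>t. \<Sum>j. cos (odd_freq j * t) * cos (real k * t) / odd_freq j ^ 2) has_integral (\<Sum>j. I j)) {0..pi}"
  proof (rule has_integral_suminf_uniform)
    show "continuous_on {0..pi} (\<lambda>t. cos (odd_freq j * t) * cos (real k * t) / odd_freq j ^ 2)" for j
      by (intro continuous_intros) (simp add: odd_freq_def)
    show "norm (cos (odd_freq j * t) * cos (real k * t) / odd_freq j ^ 2) \<le> 1 / odd_freq j ^ 2" for j t
      using odd_freq_pos[of j] by (auto simp: abs_mult divide_simps intro!: mult_le_one)
    show "((\<lambda>t. cos (odd_freq j * t) * cos (real k * t) / odd_freq j ^ 2) has_integral I j) {0..pi}" for j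
      using has_integral_divide[OF has_integral_cos_mult_cos[of "2 * j + 1" k], of "odd_freq j ^ 2"]
      unfolding I_def by (auto simp: odd_freq_def field_simps)
  qed (rule summable_inverse_odd_freq_square)
  moreover have "(\<lambda>t. \<Sum>j. cos (odd_freq j * t) * cos (real k * t) / odd_freq j ^ 2)
      = (\<lambda>t. odd_cosine_series t * cos (real k * t))"
    unfolding odd_cosine_series_def
    by (intro ext, subst suminf_mult2[OF summable_odd_cosine_series]) (simp add: field_simps)
  moreover have "(\<Sum>j. I j) = (if odd k then pi / (2 * real k ^ 2) else 0)"
  proof (cases "odd k")
    case True
    then obtain j0 where "k = 2 * j0 + 1" by (metis oddE)
    then have "I = (\<lambda>j. if j = j0 then pi / (2 * real k ^ 2) else 0)"
      unfolding I_def by auto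
    with True show ?thesis
      using sums_single[of j0 "\<lambda>_. pi / (2 * real k ^ 2)"] by (simp add: sums_iff)
  next
    case False
    then have "I = (\<lambda>_. 0)" by (auto simp: I_def fun_eq_iff)
    with False show ?thesis by simp
  qed
  ultimately show ?thesis by simp
qed

lemma has_integral_mult_cos_quadratic:
  "((\<lambda>t. pi * (pi - 2 * t) / 8 * cos (real k * t)) has_integral
      (if odd k then pi / (2 * real k ^ 2) else 0)) {0..pi}"
proof (cases "k = 0")
  case True
  have "((\<lambda>t. pi * pi * t / 8 - pi * t ^ 2 / 8) has_real_derivative pi * (pi - 2 * x) / 8) (at x)" for x
    by (auto intro!: derivative_eq_intros simp: field_simps)
  from fundamental_theorem_of_calculus_real[OF _ this, of 0 pi] True show ?thesis
    by (simp add: power2_eq_square)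
next
  case False
  define F where "F t = (pi ^ 2 / 8 - pi * t / 4) * sin (real k * t) / real k
      - (pi / 4) * cos (real k * t) / real k ^ 2" for t
  have "(F has_real_derivative pi * (pi - 2 * x) / 8 * cos (real k * x)) (at x)" for x
    unfolding F_def using False
    by (auto intro!: derivative_eq_intros simp: field_simps power2_eq_square)
  moreover have "F pi - F 0 = (if odd k then pi / (2 * real k ^ 2) else 0)"
  proof -
    have "F pi - F 0 = (pi / 4) * (1 - (-1) ^ k) / real k ^ 2"
      unfolding F_def by (simp add: diff_divide_distrib right_diff_distrib)
    then show ?thesis by (auto simp: field_simps)
  qed
  ultimately show ?thesis
    using fundamental_theorem_of_calculus_real[of 0 pi F] by simp
qed

lemma odd_cosine_series_eq:
  assumes "t \<in> {0..pi}"
  shows "odd_cosine_series t = pi * (pi - 2 * t) / 8"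
proof -
  have "odd_cosine_series t - pi * (pi - 2 * t) / 8 = 0"
  proof (rule orthogonal_cos_imp_eq_0[OF _ _ assms])
    show "continuous_on {0..pi} (\<lambda>t. odd_cosine_series t - pi * (pi - 2 * t) / 8)"
      by (auto intro!: continuous_intros continuous_on_odd_cosine_series)
    show "((\<lambda>t. (odd_cosine_series t - pi * (pi - 2 * t) / 8) * cos (real k * t)) has_integral 0) {0..pi}" for k
      using has_integral_diff[OF has_integral_odd_cosine_series_mult_cos[of k] has_integral_mult_cos_quadratic[of k],
          unfolded diff_self]
      unfolding left_diff_distrib .
  qed
  then show ?thesis by simp
qed

section \<open>The kernel of the polytope and its spectral expansion\<close>

definition Pi_kernel :: "real \<Rightarrow> real \<Rightarrow> ennreal" where
  "Pi_kernel x y = indicator {0<..} y * indicator {..<pi / 2} (x + y)"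

lemma borel_measurable_Pi_kernel[measurable]:
  "case_prod Pi_kernel \<in> borel_measurable (lborel \<Otimes>\<^sub>M lborel)"
  unfolding Pi_kernel_def by measurable

lemma all_less_Suc_mod_iff: "(\<forall>i<n. P (Suc i mod n)) \<longleftrightarrow> (\<forall>i<n. P i)"
proof
  assume P: "\<forall>i<n. P (Suc i mod n)"
  show "\<forall>i<n. P i"
  proof (intro allI impI)
    fix j assume "j < n"
    then have "j = Suc (if j = 0 then n - 1 else j - 1) mod n" "(if j = 0 then n - 1 else j - 1) < n"
      by auto
    with P show "P j" by metis
  qed
qed simp

lemma indicator_Pi_poly:
  "indicator (Pi_poly (Suc m)) u = (\<Prod>i<Suc m. Pi_kernel (u i) (u (Suc i mod Suc m)))"
  if "u \<in> {0..<Suc m} \<rightarrow>\<^sub>E UNIV"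
proof -
  have "u \<in> Pi_poly (Suc m) \<longleftrightarrow>
      (\<forall>i<Suc m. 0 < u (Suc i mod Suc m) \<and> u i + u (Suc i mod Suc m) < pi / 2)"
    using that all_less_Suc_mod_iff[of "Suc m" "\<lambda>i. 0 < u i"]
    by (auto simp: Pi_poly_def)
  then show ?thesis
    by (auto simp: Pi_kernel_def indicator_def prod_zero_iff simp del: prod.lessThan_Suc
        intro!: prod.neutral)
qed

lemma emeasure_Pi_poly:
  "emeasure (PiM {0..<Suc m} (\<lambda>_. lborel)) (Pi_poly (Suc m))
    = (\<integral>\<^sup>+x. iterated_kernel lborel Pi_kernel m x x \<partial>lborel)"
proof -
  have "Pi_poly (Suc m) = {u \<in> space (PiM {0..<Suc m} (\<lambda>_. lborel)).
      (\<forall>i<Suc m. 0 < u i) \<and> (\<forall>i<Suc m. u i + u (Suc i mod Suc m) < pi / 2)}"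
    by (auto simp: Pi_poly_def space_PiM)
  also have "\<dots> \<in> sets (PiM {0..<Suc m} (\<lambda>_. lborel))"
    by measurable
  finally have "emeasure (PiM {0..<Suc m} (\<lambda>_. lborel)) (Pi_poly (Suc m))
      = (\<integral>\<^sup>+u. (\<Prod>i<Suc m. Pi_kernel (u i) (u (Suc i mod Suc m))) \<partial>PiM {0..<Suc m} (\<lambda>_. lborel))"
    by (auto simp: space_PiM indicator_Pi_poly simp flip: nn_integral_indicator intro!: nn_integral_cong)
  also have "\<dots> = (\<integral>\<^sup>+x. iterated_kernel lborel Pi_kernel m x x \<partial>lborel)"
    by (rule lborel.nn_integral_PiM_cyclic_kernel_product) measurable
  finally show ?thesis .
qed

definition eigenvalue :: "nat \<Rightarrow> real" where
  "eigenvalue j = (-1) ^ j / odd_freq j"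

definition eigenfunction :: "nat \<Rightarrow> real \<Rightarrow> real" where
  "eigenfunction j x = cos (odd_freq j * x)"

lemma has_integral_eigenfunction:
  assumes "y \<le> pi / 2"
  shows "(eigenfunction j has_integral eigenvalue j * eigenfunction j y) {0..pi / 2 - y}"
proof -
  have "odd_freq j * (pi / 2 - y) = real j * pi + pi / 2 - odd_freq j * y"
    by (simp add: odd_freq_def field_simps)
  then have "sin (odd_freq j * (pi / 2 - y)) = (-1) ^ j * cos (odd_freq j * y)"
    by (simp add: sin_diff sin_add cos_add)
  with has_integral_cos_scaled[of "odd_freq j" 0 "pi / 2 - y"] assms odd_freq_pos[of j]
  show ?thesis
    by (simp add: eigenvalue_def eigenfunction_def[abs_def])
qed

lemma has_integral_eigenfunction_square:
  "((\<lambda>x. eigenfunction j x ^ 2) has_integral pi / 4) {0..pi / 2}"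
proof -
  have double: "eigenfunction j x ^ 2 = 1 / 2 + cos ((2 * odd_freq j) * x) / 2" for x
    unfolding eigenfunction_def using cos_double_cos[of "odd_freq j * x"]
    by (simp add: mult.assoc diff_divide_distrib)
  have "2 * odd_freq j * (pi / 2) = real (2 * j + 1) * pi"
    by (simp add: odd_freq_def)
  then have "sin (2 * odd_freq j * (pi / 2)) = 0"
    by (simp only: sin_npi)
  with odd_freq_pos[of j]
    has_integral_add[OF has_integral_const_real[of "1 / 2" 0 "pi / 2"]
      has_integral_divide[OF has_integral_cos_scaled[of "2 * odd_freq j" 0 "pi / 2"], of 2]]
  show ?thesis
    unfolding double by simp
qed

lemma abs_eigenvalue_power_le:
  assumes "m \<ge> 2"
  shows "\<bar>eigenvalue j ^ m\<bar> \<le> 1 / odd_freq j ^ 2"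
proof -
  have "\<bar>eigenvalue j ^ m\<bar> = (1 / odd_freq j) ^ m"
    using odd_freq_pos[of j] by (simp add: eigenvalue_def power_abs abs_divide)
  also have "\<dots> \<le> (1 / odd_freq j) ^ 2"
    using odd_freq_ge_1[of j] assms by (intro power_decreasing) auto
  finally show ?thesis by (simp add: power_divide)
qed

lemma abs_spectral_term_le:
  assumes "m \<ge> 2"
  shows "\<bar>4 / pi * eigenvalue j ^ m * eigenfunction j x * eigenfunction j y\<bar> \<le> 4 / pi * (1 / odd_freq j ^ 2)"
proof -
  have "\<bar>4 / pi * eigenvalue j ^ m * eigenfunction j x * eigenfunction j y\<bar>
      = 4 / pi * (\<bar>eigenvalue j ^ m\<bar> * (\<bar>eigenfunction j x\<bar> * \<bar>eigenfunction j y\<bar>))"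
    by (simp add: abs_mult)
  also have "\<dots> \<le> 4 / pi * (1 / odd_freq j ^ 2 * 1)"
    using abs_eigenvalue_power_le[OF assms, of j]
    by (intro mult_left_mono mult_mono mult_le_one) (auto simp: eigenfunction_def)
  finally show ?thesis by simp
qed

lemma summable_spectral_bound: "summable (\<lambda>j. 4 / pi * (1 / odd_freq j ^ 2))"
  by (intro summable_mult summable_inverse_odd_freq_square)

text \<open>The factor 4 / pi normalises the eigenfunctions, whose squares integrate to pi / 4 over
  [0, pi/2].\<close>

definition spectral_kernel :: "nat \<Rightarrow> real \<Rightarrow> real \<Rightarrow> real" where
  "spectral_kernel m x y = (\<Sum>j. 4 / pi * eigenvalue j ^ m * eigenfunction j x * eigenfunction j y)"

lemma spectral_kernel_2:
  assumes "x \<in> {0..pi / 2}" "y \<in> {0..pi / 2}"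
  shows "spectral_kernel 2 x y = pi / 2 - max x y"
proof -
  have summand: "4 / pi * eigenvalue j ^ 2 * eigenfunction j x * eigenfunction j y
      = 2 / pi * (cos (odd_freq j * \<bar>x - y\<bar>) / odd_freq j ^ 2)
      + 2 / pi * (cos (odd_freq j * (x + y)) / odd_freq j ^ 2)" for j
  proof -
    have "4 / pi * eigenvalue j ^ 2 * eigenfunction j x * eigenfunction j y
        = 4 / pi * (1 / odd_freq j ^ 2) * (eigenfunction j x * eigenfunction j y)"
      by (simp add: eigenvalue_def power_divide flip: power_mult)
    also have "\<dots> = 4 / pi * (1 / odd_freq j ^ 2)
        * ((cos (odd_freq j * x - odd_freq j * y) + cos (odd_freq j * x + odd_freq j * y)) / 2)"
      by (simp add: eigenfunction_def cos_times_cos)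
    also have "cos (odd_freq j * x - odd_freq j * y) = cos (odd_freq j * \<bar>x - y\<bar>)"
      by (cases "x \<le> y") (simp_all add: right_diff_distrib, metis cos_minus minus_diff_eq)
    finally show ?thesis
      by (simp add: distrib_left field_simps)
  qed
  have "spectral_kernel 2 x y = (\<Sum>j. 2 / pi * (cos (odd_freq j * \<bar>x - y\<bar>) / odd_freq j ^ 2))
      + (\<Sum>j. 2 / pi * (cos (odd_freq j * (x + y)) / odd_freq j ^ 2))"
    unfolding spectral_kernel_def mult.assoc[symmetric] summand
    by (intro suminf_add[symmetric] summable_mult summable_odd_cosine_series)
  also have "\<dots> = 2 / pi * odd_cosine_series \<bar>x - y\<bar> + 2 / pi * odd_cosine_series (x + y)"
    unfolding odd_cosine_series_def by (simp only: suminf_mult[OF summable_odd_cosine_series])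
  also have "\<dots> = 2 / pi * (pi * (pi - 2 * \<bar>x - y\<bar>) / 8) + 2 / pi * (pi * (pi - 2 * (x + y)) / 8)"
  proof -
    have "\<bar>x - y\<bar> \<in> {0..pi}" "x + y \<in> {0..pi}"
      using assms by auto
    then show ?thesis by (simp only: odd_cosine_series_eq)
  qed
  also have "\<dots> = pi / 2 - max x y"
    by (simp add: max_def abs_if field_simps)
  finally show ?thesis .
qed

lemma has_integral_spectral_kernel:
  assumes "m \<ge> 2" "y \<le> pi / 2"
  shows "(spectral_kernel m x has_integral spectral_kernel (Suc m) x y) {0..pi / 2 - y}"
proof -
  have "((\<lambda>z. \<Sum>j. 4 / pi * eigenvalue j ^ m * eigenfunction j x * eigenfunction j z) has_integral
      (\<Sum>j. 4 / pi * eigenvalue j ^ m * eigenfunction j x * (eigenvalue j * eigenfunction j y))) {0..pi / 2 - y}"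
  proof (rule has_integral_suminf_uniform)
    show "continuous_on {0..pi / 2 - y} (\<lambda>z. 4 / pi * eigenvalue j ^ m * eigenfunction j x * eigenfunction j z)" for j
      unfolding eigenfunction_def by (intro continuous_intros)
    show "norm (4 / pi * eigenvalue j ^ m * eigenfunction j x * eigenfunction j z) \<le> 4 / pi * (1 / odd_freq j ^ 2)" for j z
      using abs_spectral_term_le[OF assms(1)] by simp
    show "((\<lambda>z. 4 / pi * eigenvalue j ^ m * eigenfunction j x * eigenfunction j z) has_integral
        4 / pi * eigenvalue j ^ m * eigenfunction j x * (eigenvalue j * eigenfunction j y)) {0..pi / 2 - y}" for j
      by (intro has_integral_mult_right has_integral_eigenfunction assms)
  qed (rule summable_spectral_bound)
  then show ?thesis
    unfolding spectral_kernel_def by (simp add: mult_ac)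
qed

lemma spectral_kernel_nonneg:
  assumes "m \<ge> 2" "x \<in> {0..pi / 2}" "y \<in> {0..pi / 2}"
  shows "spectral_kernel m x y \<ge> 0"
  using assms(1,3)
proof (induction m arbitrary: y rule: dec_induct)
  case base
  then show ?case using assms(2) by (simp add: spectral_kernel_2 max_def)
next
  case (step m)
  show ?case
    using step by (intro has_integral_nonneg[OF has_integral_spectral_kernel]) auto
qed

lemma has_integral_spectral_kernel_diagonal:
  assumes "m \<ge> 2"
  shows "((\<lambda>x. spectral_kernel m x x) has_integral (\<Sum>j. eigenvalue j ^ m)) {0..pi / 2}"
proof -
  have "((\<lambda>x. \<Sum>j. 4 / pi * eigenvalue j ^ m * (eigenfunction j x ^ 2)) has_integral
      (\<Sum>j. 4 / pi * eigenvalue j ^ m * (pi / 4))) {0..pi / 2}"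
  proof (rule has_integral_suminf_uniform)
    show "continuous_on {0..pi / 2} (\<lambda>x. 4 / pi * eigenvalue j ^ m * (eigenfunction j x ^ 2))" for j
      unfolding eigenfunction_def by (intro continuous_intros)
    show "norm (4 / pi * eigenvalue j ^ m * (eigenfunction j x ^ 2)) \<le> 4 / pi * (1 / odd_freq j ^ 2)" for j x
      using abs_spectral_term_le[OF assms, of j x x] by (simp add: power2_eq_square mult_ac)
    show "((\<lambda>x. 4 / pi * eigenvalue j ^ m * (eigenfunction j x ^ 2)) has_integral
        4 / pi * eigenvalue j ^ m * (pi / 4)) {0..pi / 2}" for j
      by (intro has_integral_mult_right has_integral_eigenfunction_square)
  qed (rule summable_spectral_bound)
  then show ?thesis
    unfolding spectral_kernel_def by (simp add: power2_eq_square mult_ac)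
qed

lemma iterated_Pi_kernel_eq_0:
  assumes "x \<ge> pi / 2 \<or> y \<le> 0"
  shows "iterated_kernel lborel Pi_kernel m x y = 0"
  using assms by (induction m arbitrary: y) (auto simp: Pi_kernel_def indicator_def)

lemma iterated_Pi_kernel_eq_spectral_kernel:
  assumes "0 \<le> x" "x < pi / 2"
  shows "iterated_kernel lborel Pi_kernel (Suc m) x y
    = ennreal (indicator {0<..<pi / 2} y * spectral_kernel (m + 2) x y)"
proof (induction m arbitrary: y)
  case 0
  have "iterated_kernel lborel Pi_kernel (Suc 0) x y
      = (\<integral>\<^sup>+z. indicator {0<..<pi / 2} y * indicator {0<..<pi / 2 - max x y} z \<partial>lborel)"
    unfolding iterated_kernel.simps by (rule nn_integral_cong) (auto simp: Pi_kernel_def indicator_def)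
  also have "\<dots> = indicator {0<..<pi / 2} y * ennreal (pi / 2 - max x y)"
    by (cases "max x y \<le> pi / 2") (simp_all add: nn_integral_cmult ennreal_neg)
  also have "\<dots> = ennreal (indicator {0<..<pi / 2} y * spectral_kernel 2 x y)"
    using assms by (auto simp: indicator_def spectral_kernel_2)
  finally show ?case by (simp add: numeral_2_eq_2)
next
  case (Suc m)
  have "iterated_kernel lborel Pi_kernel (Suc (Suc m)) x y
      = (\<integral>\<^sup>+z. indicator {0<..<pi / 2} y * (ennreal (spectral_kernel (m + 2) x z) * indicator {0<..<pi / 2 - y} z) \<partial>lborel)"
    unfolding iterated_kernel.simps(2)[of _ _ "Suc m"] Suc
    by (intro nn_integral_cong) (auto simp: Pi_kernel_def indicator_def)
  also have "\<dots> = ennreal (indicator {0<..<pi / 2} y * spectral_kernel (m + 3) x y)"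
  proof (cases "y \<in> {0<..<pi / 2}")
    case True
    have "(\<integral>\<^sup>+z. ennreal (spectral_kernel (m + 2) x z) * indicator {0<..<pi / 2 - y} z \<partial>lborel)
        = ennreal (spectral_kernel (m + 3) x y)"
    proof (rule nn_integral_has_integral_lebesgue')
      show "0 \<le> spectral_kernel (m + 2) x z" if "z \<in> {0<..<pi / 2 - y}" for z
        using that True assms by (intro spectral_kernel_nonneg) auto
      show "(spectral_kernel (m + 2) x has_integral spectral_kernel (m + 3) x y) {0<..<pi / 2 - y}"
        using has_integral_spectral_kernel[of "m + 2" y x] True
        by (simp add: has_integral_Icc_iff_Ioo numeral_3_eq_3)
    qed
    with True show ?thesis by simp
  qed simp
  finally show ?case by (simp add: numeral_3_eq_3)
qed

section \<open>The volume\<close>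

lemma of_int_4_int_decode_add_1: "real_of_int (4 * int_decode j + 1) = (-1) ^ j * odd_freq j"
proof (cases "even j")
  case True
  then show ?thesis by (auto simp: int_decode_def sum_decode_def odd_freq_def elim!: evenE)
next
  case False
  then show ?thesis by (auto simp: int_decode_def sum_decode_def odd_freq_def elim!: oddE)
qed

lemma S_sum_eq_suminf_eigenvalue_power:
  assumes "n \<ge> 2"
  shows "S_sum n = (\<Sum>j. eigenvalue j ^ n)"
proof -
  have norm_summable: "summable (\<lambda>j. norm (eigenvalue j ^ n))"
    by (rule summable_comparison_test[OF _ summable_inverse_odd_freq_square])
       (use abs_eigenvalue_power_le[OF assms] in auto)
  have "((\<lambda>j. eigenvalue j ^ n) has_sum (\<Sum>j. eigenvalue j ^ n)) UNIV"
    by (intro norm_summable_imp_has_sum summable_sums summable_norm_cancel[OF norm_summable] norm_summable)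
  moreover have "eigenvalue j ^ n = 1 / real_of_int (4 * int_decode j + 1) ^ n" for j
  proof -
    have "1 / ((-1) ^ j * odd_freq j) = (-1) ^ j / odd_freq j"
      by (cases "even j") auto
    then show ?thesis
      unfolding eigenvalue_def of_int_4_int_decode_add_1 power_one_over[symmetric] by simp
  qed
  ultimately have "((\<lambda>j. 1 / real_of_int (4 * int_decode j + 1) ^ n) has_sum (\<Sum>j. eigenvalue j ^ n)) UNIV"
    by (simp only:)
  then have "((\<lambda>k. 1 / real_of_int (4 * k + 1) ^ n) has_sum (\<Sum>j. eigenvalue j ^ n)) UNIV"
    by (rule has_sum_reindex_bij_betw[OF bij_int_decode, THEN iffD1])
  then show ?thesis
    unfolding S_sum_def by (rule infsumI)
qed

lemma iterated_Pi_kernel_diagonal: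
  "iterated_kernel lborel Pi_kernel (Suc m) x x
    = ennreal (spectral_kernel (m + 2) x x) * indicator {0<..<pi / 2} x"
proof (cases "x \<in> {0<..<pi / 2}")
  case True
  then show ?thesis
    by (subst iterated_Pi_kernel_eq_spectral_kernel) auto
next
  case False
  then have "x \<ge> pi / 2 \<or> x \<le> 0"
    by auto
  then show ?thesis
    by (subst iterated_Pi_kernel_eq_0) auto
qed

theorem theorem1:
  fixes n :: nat
  assumes "n \<ge> 2"
  shows "emeasure (PiM {0..<n} (\<lambda>_. lborel)) (Pi_poly n) = ennreal (S_sum n)"
proof -
  obtain m where n: "n = m + 2"
    using assms by (metis le_add_diff_inverse2)
  have "emeasure (PiM {0..<n} (\<lambda>_. lborel)) (Pi_poly n)
      = (\<integral>\<^sup>+x. iterated_kernel lborel Pi_kernel (Suc m) x x \<partial>lborel)"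
    using emeasure_Pi_poly[of "Suc m"] by (simp add: n)
  also have "\<dots> = (\<integral>\<^sup>+x. ennreal (spectral_kernel n x x) * indicator {0<..<pi / 2} x \<partial>lborel)"
    by (simp only: iterated_Pi_kernel_diagonal n)
  also have "\<dots> = ennreal (\<Sum>j. eigenvalue j ^ n)"
  proof (rule nn_integral_has_integral_lebesgue')
    show "0 \<le> spectral_kernel n x x" if "x \<in> {0<..<pi / 2}" for x
      using that assms by (intro spectral_kernel_nonneg) auto
    show "((\<lambda>x. spectral_kernel n x x) has_integral (\<Sum>j. eigenvalue j ^ n)) {0<..<pi / 2}"
      using has_integral_spectral_kernel_diagonal[OF assms] by (simp add: has_integral_Icc_iff_Ioo)
  qed
  also have "\<dots> = ennreal (S_sum n)"
    by (simp add: S_sum_eq_suminf_eigenvalue_power[OF assms])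
  finally show ?thesis .
qed

end
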